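(* Let $E$ be a nonzero $[\lambda]$-primitive theme. Then $E$ has a unique normal sub-(a,b)-module of rank $1$. Moreover, if $F\cong E_{\lambda_1}$ denotes this normal rank $1$ submodule, then the quotient $E/F$ is again a $[\lambda]$-primitive theme.
   Context: $\tilde{\mathcal A}$ is the $\mathbb C$-algebra of formal series $\sum_{\nu\ge0}P_\nu(a)b^\nu$ ($P_\nu\in\mathbb C[z]$) with product determined by $ab-ba=b^2$ and $b$-adic continuity of multiplication by $a$. An (a,b)-module is a left $\tilde{\mathcal A}$-module free of finite rank over $\mathbb C[[b]]$. Regular: contained in an (a,b)-module $E'$ with $aE'\subset bE'$; Bernstein polynomial: minimal polynomial of $-b^{-1}a$ on $E^\sharp/bE^\sharp$, $E^\sharp$ the saturation of $E$ by $b^{-1}a$. $E_\mu=\mathbb C[[b]]e_\mu$ with $ae_\mu=\mu be_\mu$. A submodule $F\subset E$ is normal if $F\cap bE=bF$. For rational $\lambda\in]0,1]$, $\Xi_\lambda=\bigoplus_{j\ge0}\mathbb C[[b]]e_{\lambda,j}$ (finite sums; $e_{\lambda,j}$ stands for $s^{\lambda-1}(\log s)^j/j!$) with $ae_{\lambda,0}=\lambda be_{\lambda,0}$, $ae_{\lambda,j}=\lambda be_{\lambda,j}+be_{\lambda,j-1}$, extended by $aS(b)=S(b)a+b^2S'(b)$; $\Xi=\bigoplus_{\lambda\in\mathbb Q\cap]0,1]}\Xi_\lambda$. A theme is a left $\tilde{\mathcal A}$-module isomorphic to $\tilde{\mathcal A}\varphi\subset\Xi$ for some $\varphi\in\Xi$.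 A regular (a,b)-module is $[\lambda]$-primitive if all roots of its Bernstein polynomial lie in $-\lambda+\mathbb Z$. *)

theory Defs
  imports "HOL-Computational_Algebra.Computational_Algebra"
begin

text \<open>An element of Xi is represented by its coordinates: x l j is the power series
  S(b) in front of e_{l,j}.  Only finitely many coordinates are nonzero and only
  rational l in ]0,1] may occur.\<close>

type_synonym xi = "rat \<Rightarrow> nat \<Rightarrow> complex fps"

definition Xi :: "xi set" where
  "Xi = {x. finite {(l, j). x l j \<noteq> 0} \<and> (\<forall>l j. x l j \<noteq> 0 \<longrightarrow> 0 < l \<and> l \<le> 1)}"

definition xi_zero :: xi where
  "xi_zero = (\<lambda>l j. 0)"

definition xi_add :: "xi \<Rightarrow> xi \<Rightarrow> xi" where
  "xi_add x y = (\<lambda>l j. x l j + y l j)"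

definition xi_smul :: "complex fps \<Rightarrow> xi \<Rightarrow> xi" where
  "xi_smul S x = (\<lambda>l j. S * x l j)"

definition xi_b :: "xi \<Rightarrow> xi" where
  "xi_b x = xi_smul fps_X x"

text \<open>Action of a:  a (S e_{l,j}) = S (l b e_{l,j} + b e_{l,j-1}) + b^2 S' e_{l,j}.\<close>
definition xi_a :: "xi \<Rightarrow> xi" where
  "xi_a x = (\<lambda>l j. fps_X * (fps_const (of_rat l) * x l j + x l (Suc j))
                     + fps_X ^ 2 * fps_deriv (x l j))"

definition poly_op :: "complex poly \<Rightarrow> (xi \<Rightarrow> xi) \<Rightarrow> xi \<Rightarrow> xi" where
  "poly_op p T x = (\<lambda>l j. \<Sum>i\<le>degree p. fps_const (coeff p i) * (T ^^ i) x l j)"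

text \<open>Action of the element sum_nu P_nu(a) b^nu of A~ (b-adically convergent sum;
  the nu-th term has b-order at least nu, so the n-th coefficient is a finite sum).\<close>
definition xi_act :: "(nat \<Rightarrow> complex poly) \<Rightarrow> xi \<Rightarrow> xi" where
  "xi_act P x = (\<lambda>l j. Abs_fps (\<lambda>n. \<Sum>\<nu>\<le>n. poly_op (P \<nu>) xi_a ((xi_b ^^ \<nu>) x) l j $ n))"

definition theme_gen :: "xi \<Rightarrow> xi set" where
  "theme_gen \<phi> = range (\<lambda>P. xi_act P \<phi>)"

definition sub_module :: "xi set \<Rightarrow> bool" where
  "sub_module F \<longleftrightarrow> (\<forall>x\<in>F. \<forall>y\<in>F. xi_add x y \<in> F) \<and> (\<forall>P. \<forall>x\<in>F. xi_act P x \<in> F)"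

text \<open>F is a sub-(a,b)-module of E of rank 1: A~-submodule, free of rank 1 over C[[b]].\<close>
definition rank1_sub :: "xi set \<Rightarrow> xi set \<Rightarrow> bool" where
  "rank1_sub E F \<longleftrightarrow> F \<subseteq> E \<and> sub_module F \<and> (\<exists>f. bij_betw (\<lambda>S. xi_smul S f) UNIV F)"

definition normal_sub :: "xi set \<Rightarrow> xi set \<Rightarrow> bool" where
  "normal_sub E F \<longleftrightarrow> F \<inter> xi_b ` E = xi_b ` F"

text \<open>b^{-1} a on Xi (a Xi is contained in b Xi).\<close>
definition xi_binva :: "xi \<Rightarrow> xi" where
  "xi_binva x = (\<lambda>l j. fps_shift 1 (xi_a x l j))"

definition xi_neg :: "xi \<Rightarrow> xi" where
  "xi_neg x = (\<lambda>l j. - x l j)"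

definition saturation :: "xi set \<Rightarrow> xi set" where
  "saturation E = \<Inter>{M. E \<subseteq> M \<and> (\<forall>x\<in>M. \<forall>y\<in>M. xi_add x y \<in> M)
                        \<and> (\<forall>S. \<forall>x\<in>M. xi_smul S x \<in> M) \<and> (\<forall>x\<in>M. xi_binva x \<in> M)}"

text \<open>p annihilates -b^{-1}a on E#/bE#.\<close>
definition annihilates :: "xi set \<Rightarrow> complex poly \<Rightarrow> bool" where
  "annihilates E p \<longleftrightarrow>
     (\<forall>x\<in>saturation E. poly_op p (\<lambda>y. xi_neg (xi_binva y)) x \<in> xi_b ` saturation E)"

text \<open>Bernstein polynomial: minimal (monic) polynomial of -b^{-1}a on E#/bE#.\<close>
definition is_bernstein_poly :: "xi set \<Rightarrow> complex poly \<Rightarrow> bool" where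
  "is_bernstein_poly E p \<longleftrightarrow> lead_coeff p = 1 \<and> annihilates E p \<and>
     (\<forall>q. q \<noteq> 0 \<longrightarrow> annihilates E q \<longrightarrow> degree p \<le> degree q)"

definition lambda_primitive :: "complex \<Rightarrow> xi set \<Rightarrow> bool" where
  "lambda_primitive lam E \<longleftrightarrow>
     (\<exists>p. is_bernstein_poly E p \<and> (\<forall>z. poly p z = 0 \<longrightarrow> (\<exists>n::int. z = - lam + of_int n)))"

text \<open>E/F is isomorphic (as A~-module) to a [lam]-primitive theme A~ psi.\<close>
definition quotient_primitive_theme :: "complex \<Rightarrow> xi set \<Rightarrow> xi set \<Rightarrow> bool" where
  "quotient_primitive_theme lam E F \<longleftrightarrow>
     (\<exists>\<psi>\<in>Xi. \<exists>T. (\<forall>x\<in>E. \<forall>y\<in>E. T (xi_add x y) = xi_add (T x) (T y))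
         \<and> (\<forall>P. \<forall>x\<in>E. T (xi_act P x) = xi_act P (T x))
         \<and> T ` E = theme_gen \<psi>
         \<and> {x\<in>E. T x = xi_zero} = F
         \<and> lambda_primitive lam (theme_gen \<psi>))"

end

theory Submission
  imports Defs
begin

text \<open>
  Because E is generated by \<open>\<phi>\<close>, every element of E and of its saturation vanishes in all
  coordinates \<open>e\<^sub>\<mu>\<^sub>,\<^sub>j\<close> beyond the top log-degree of \<open>\<phi>\<close> in \<open>\<Xi>\<^sub>\<mu>\<close>.  On that top coordinate
  \<open>-b\<^sup>-\<^sup>1a\<close> acts diagonally by \<open>-(\<mu> + n)\<close> on the coefficient of \<open>b\<^sup>n\<close>, so any annihilating
  polynomial has a root \<open>-(\<mu> + m)\<close>; primitivity therefore forces all exponents \<open>\<mu>\<close> of \<open>\<phi>\<close>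
  into one class modulo \<open>\<int>\<close>, hence, as \<open>\<mu> \<in> ]0,1]\<close>, to a single \<open>\<lambda>\<^sub>0\<close>.

  The map \<open>e\<^sub>\<lambda>\<^sub>,\<^sub>j \<mapsto> e\<^sub>\<lambda>\<^sub>,\<^sub>j\<^sub>-\<^sub>1\<close> commutes with the action of \<open>\<tilde>\<A>\<close>.  Its kernel in E consists of
  multiples of \<open>e\<^sub>\<lambda>\<^sub>0\<^sub>,\<^sub>0\<close>; it is nonzero, because \<open>a - (\<lambda>\<^sub>0 + m)b\<close> lowers the log-degree of a
  suitably normalised element, and it is generated by any of its elements of minimal
  \<open>b\<close>-order.  The same lowering shows that the generator of a rank one submodule has no log
  terms, and normality makes it a unit multiple of the generator of the kernel.  The
  quotient is the image of E under the shift, which is the theme of the shifted \<open>\<phi>\<close>, and the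
  shift carries annihilating polynomials of the saturation to annihilating polynomials.
\<close>

section \<open>Coefficient calculus on Xi\<close>

lemma xi_eqI: "(\<And>l j n. x l j $ n = y l j $ n) \<Longrightarrow> x = y"
  by (intro ext fps_ext) simp

lemma xi_b_nth: "xi_b y l j $ n = (if n = 0 then 0 else y l j $ (n - 1))"
  by (simp add: xi_b_def xi_smul_def)

lemma xi_b_nth_0 [simp]: "xi_b y l j $ 0 = 0"
  and xi_b_nth_Suc [simp]: "xi_b y l j $ Suc n = y l j $ n"
  by (simp_all add: xi_b_nth)

lemma xi_a_nth: "xi_a y l j $ n = (if n = 0 then 0 else
   (of_rat l + of_nat (n - 1)) * y l j $ (n - 1) + y l (Suc j) $ (n - 1))"
  by (cases n; cases "n - 1")
    (simp_all add: xi_a_def fps_X_power_mult_nth fps_X_power_mult_right_nth algebra_simps)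

lemma xi_a_nth_0 [simp]: "xi_a y l j $ 0 = 0"
  and xi_a_nth_Suc [simp]: "xi_a y l j $ Suc n = (of_rat l + of_nat n) * y l j $ n + y l (Suc j) $ n"
  by (simp_all add: xi_a_nth)

lemma xi_binva_nth [simp]: "xi_binva y l j $ n = (of_rat l + of_nat n) * y l j $ n + y l (Suc j) $ n"
  by (simp add: xi_binva_def)

lemma xi_add_nth [simp]: "xi_add x y l j $ n = x l j $ n + y l j $ n"
  by (simp add: xi_add_def)

lemma xi_neg_nth [simp]: "xi_neg x l j $ n = - x l j $ n"
  by (simp add: xi_neg_def)

lemma xi_smul_const_nth [simp]: "xi_smul (fps_const c) x l j $ n = c * x l j $ n"
  by (simp add: xi_smul_def)

lemma xi_zero_nth [simp]: "xi_zero l j $ n = 0"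
  by (simp add: xi_zero_def)

lemma xi_add_zero [simp]: "xi_add xi_zero xi_zero = xi_zero"
  by (rule xi_eqI) simp

lemma xi_neg_eq_smul: "xi_neg x = xi_smul (fps_const (-1)) x"
  by (rule xi_eqI) simp

lemma xi_smul_smul: "xi_smul S (xi_smul T x) = xi_smul (S * T) x"
  by (simp add: xi_smul_def mult.assoc)

lemma xi_b_add: "xi_b (xi_add x y) = xi_add (xi_b x) (xi_b y)"
  by (rule xi_eqI) (simp add: xi_b_nth)

lemma xi_b_smul: "xi_b (xi_smul S x) = xi_smul S (xi_b x)"
  by (simp add: xi_b_def xi_smul_smul mult.commute)

lemma xi_b_inj: "xi_b x = xi_b y \<Longrightarrow> x = y"
  by (rule xi_eqI) (metis xi_b_nth_Suc)

lemma xi_b_zero [simp]: "xi_b xi_zero = xi_zero"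
  by (rule xi_eqI) (simp add: xi_b_nth)

text \<open>The commutation relation \<open>ab - ba = b\<^sup>2\<close>, read as \<open>ba = ab - b\<^sup>2\<close>.\<close>
lemma xi_b_xi_a: "xi_b (xi_a y) = xi_add (xi_a (xi_b y)) (xi_neg (xi_b (xi_b y)))"
  by (rule xi_eqI) (case_tac n; case_tac "n - 1"; simp add: algebra_simps)

lemma poly_op_nth: "poly_op p T x l j $ n = (\<Sum>i\<le>degree p. coeff p i * (T ^^ i) x l j $ n)"
  by (simp add: poly_op_def fps_sum_nth)

lemma poly_op_nth_upto:
  assumes "degree p \<le> N"
  shows "poly_op p T x l j $ n = (\<Sum>i\<le>N. coeff p i * (T ^^ i) x l j $ n)"
proof -
  have "(\<Sum>i\<le>N. coeff p i * (T ^^ i) x l j $ n) = (\<Sum>i\<le>degree p. coeff p i * (T ^^ i) x l j $ n)"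
    by (rule sum.mono_neutral_right) (use assms in \<open>auto simp: coeff_eq_0 not_le\<close>)
  then show ?thesis by (simp add: poly_op_nth)
qed

lemma poly_op_add: "poly_op (p + q) T x = xi_add (poly_op p T x) (poly_op q T x)"
proof (rule xi_eqI)
  fix l j n
  define N where "N = max (degree p) (degree q)"
  have "degree (p + q) \<le> N" "degree p \<le> N" "degree q \<le> N"
    using degree_add_le[of p N q] N_def by auto
  then show "poly_op (p + q) T x l j $ n = xi_add (poly_op p T x) (poly_op q T x) l j $ n"
    by (simp add: poly_op_nth_upto[where N=N] distrib_right sum.distrib)
qed

lemma poly_op_smult: "poly_op (smult c p) T x = xi_smul (fps_const c) (poly_op p T x)"
  by (rule xi_eqI)
    (simp add: poly_op_nth_upto[where N="degree p"] degree_smult_le sum_distrib_left mult.assoc)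

lemma poly_op_const: "poly_op [:c:] T x = xi_smul (fps_const c) x"
  by (rule xi_eqI) (simp add: poly_op_nth)

lemma poly_op_zero: "poly_op 0 T x = xi_zero"
  by (rule xi_eqI) (simp add: poly_op_nth)

lemma poly_op_sum:
  "finite A \<Longrightarrow> poly_op (\<Sum>i\<in>A. p i) T x l j $ n = (\<Sum>i\<in>A. poly_op (p i) T x l j $ n)"
  by (induction A rule: finite_induct) (simp_all add: poly_op_zero poly_op_add)

lemma poly_op_pCons0: "poly_op (pCons 0 p) T x = poly_op p T (T x)"
proof (rule xi_eqI)
  fix l j n
  have "degree (pCons 0 p) \<le> Suc (degree p)" by (simp add: degree_pCons_le)
  then show "poly_op (pCons 0 p) T x l j $ n = poly_op p T (T x) l j $ n"
    by (simp add: poly_op_nth_upto poly_op_nth sum.atMost_Suc_shift funpow_Suc_right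
        del: sum.atMost_Suc funpow.simps)
qed

lemma poly_op_pCons0_xi_a: "poly_op (pCons 0 p) xi_a x = xi_a (poly_op p xi_a x)"
proof (rule xi_eqI)
  fix l j n
  have "degree (pCons 0 p) \<le> Suc (degree p)" by (simp add: degree_pCons_le)
  then show "poly_op (pCons 0 p) xi_a x l j $ n = xi_a (poly_op p xi_a x) l j $ n"
    by (cases n) (simp_all add: poly_op_nth_upto poly_op_nth sum.atMost_Suc_shift
        sum_distrib_left sum.distrib algebra_simps del: sum.atMost_Suc)
qed


definition xi_order_ge :: "nat \<Rightarrow> xi \<Rightarrow> bool" where
  "xi_order_ge \<nu> y \<longleftrightarrow> (\<forall>l j n. n < \<nu> \<longrightarrow> y l j $ n = 0)"

lemma xi_order_ge_poly_op: "xi_order_ge \<nu> y \<Longrightarrow> xi_order_ge \<nu> (poly_op p xi_a y)"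
proof -
  assume "xi_order_ge \<nu> y"
  then have "xi_order_ge \<nu> ((xi_a ^^ i) y)" for i
    by (induction i) (auto simp: xi_order_ge_def xi_a_nth)
  then show ?thesis by (simp add: xi_order_ge_def poly_op_nth)
qed

lemma xi_order_ge_bpow: "xi_order_ge \<nu> ((xi_b ^^ \<nu>) x)"
  by (induction \<nu>) (auto simp: xi_order_ge_def xi_b_nth)

lemma bpow_nth: "(xi_b ^^ \<nu>) x l j $ n = (if n < \<nu> then 0 else x l j $ (n - \<nu>))"
  by (induction \<nu> arbitrary: n) (auto simp: xi_b_nth)

definition act_term :: "(nat \<Rightarrow> complex poly) \<Rightarrow> xi \<Rightarrow> nat \<Rightarrow> xi" where
  "act_term P x \<nu> = poly_op (P \<nu>) xi_a ((xi_b ^^ \<nu>) x)"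

lemma act_term_nth_below: "n < \<nu> \<Longrightarrow> act_term P x \<nu> l j $ n = 0"
  using xi_order_ge_poly_op[OF xi_order_ge_bpow] unfolding act_term_def xi_order_ge_def by blast

lemma act_term_zero: "P \<nu> = 0 \<Longrightarrow> act_term P x \<nu> = xi_zero"
  by (simp add: act_term_def poly_op_zero)

lemma xi_act_nth: "xi_act P x l j $ n = (\<Sum>\<nu>\<le>n. act_term P x \<nu> l j $ n)"
  by (simp add: xi_act_def act_term_def)

lemma xi_act_nth_upto:
  assumes "n \<le> N"
  shows "xi_act P x l j $ n = (\<Sum>\<nu>\<le>N. act_term P x \<nu> l j $ n)"
proof -
  have "(\<Sum>\<nu>\<le>N. act_term P x \<nu> l j $ n) = (\<Sum>\<nu>\<le>n. act_term P x \<nu> l j $ n)"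
    by (rule sum.mono_neutral_right) (use assms in \<open>auto simp: act_term_nth_below\<close>)
  then show ?thesis by (simp add: xi_act_nth)
qed

lemma xi_act_add: "xi_act (\<lambda>\<nu>. P \<nu> + Q \<nu>) x = xi_add (xi_act P x) (xi_act Q x)"
  by (rule xi_eqI) (simp add: xi_act_nth act_term_def poly_op_add sum.distrib)

lemma xi_act_smult: "xi_act (\<lambda>\<nu>. smult c (P \<nu>)) x = xi_smul (fps_const c) (xi_act P x)"
  by (rule xi_eqI) (simp add: xi_act_nth act_term_def poly_op_smult sum_distrib_left)

lemma xi_act_uminus: "xi_act (\<lambda>\<nu>. - P \<nu>) x = xi_neg (xi_act P x)"
  using xi_act_smult[of "-1" P x] by (simp add: xi_neg_eq_smul)

lemma xi_act_pCons0: "xi_act (\<lambda>\<nu>. pCons 0 (P \<nu>)) x = xi_a (xi_act P x)"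
proof (rule xi_eqI)
  fix l j n
  have act_term_pCons0: "act_term (\<lambda>\<nu>. pCons 0 (P \<nu>)) x \<nu> = xi_a (act_term P x \<nu>)" for \<nu>
    by (simp add: act_term_def poly_op_pCons0_xi_a)
  show "xi_act (\<lambda>\<nu>. pCons 0 (P \<nu>)) x l j $ n = xi_a (xi_act P x) l j $ n"
  proof (cases n)
    case 0 then show ?thesis by (simp add: xi_act_nth act_term_pCons0)
  next
    case (Suc m)
    have "xi_a (xi_act P x) l j $ n
        = (of_rat l + of_nat m) * xi_act P x l j $ m + xi_act P x l (Suc j) $ m"
      by (simp add: Suc)
    also have "\<dots> = (\<Sum>\<nu>\<le>Suc m. (of_rat l + of_nat m) * act_term P x \<nu> l j $ m
                                  + act_term P x \<nu> l (Suc j) $ m)"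
      by (simp only: xi_act_nth_upto[of m "Suc m"] le_SucI order_refl sum_distrib_left sum.distrib)
    also have "\<dots> = xi_act (\<lambda>\<nu>. pCons 0 (P \<nu>)) x l j $ n"
      by (simp only: xi_act_nth act_term_pCons0 Suc xi_a_nth_Suc)
    finally show ?thesis by simp
  qed
qed

lemma xi_act_single:
  "xi_act (\<lambda>\<nu>. if \<nu> = k then p else 0) x = poly_op p xi_a ((xi_b ^^ k) x)"
proof (rule xi_eqI)
  fix l j n
  let ?P = "\<lambda>\<nu>. if \<nu> = k then p else 0"
  show "xi_act ?P x l j $ n = poly_op p xi_a ((xi_b ^^ k) x) l j $ n"
  proof (cases "n < k")
    case True
    then show ?thesis using xi_order_ge_poly_op[OF xi_order_ge_bpow, of k p x]
      by (auto simp: xi_act_nth act_term_def poly_op_zero xi_order_ge_def intro!: sum.neutral)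
  next
    case False
    then have "(\<Sum>\<nu>\<le>n. act_term ?P x \<nu> l j $ n) = (\<Sum>\<nu>\<in>{k}. act_term ?P x \<nu> l j $ n)"
      by (intro sum.mono_neutral_right) (auto simp: act_term_zero)
    then show ?thesis by (simp add: xi_act_nth act_term_def)
  qed
qed

lemma xi_act_one: "xi_act (\<lambda>\<nu>. if \<nu> = 0 then 1 else 0) x = x"
  using xi_act_single[of 0 1 x] by (simp add: one_pCons poly_op_const xi_smul_def)

lemma xi_smul_as_act: "xi_smul S x = xi_act (\<lambda>\<nu>. [:S $ \<nu>:]) x"
proof (rule xi_eqI)
  fix l j n
  have "xi_act (\<lambda>\<nu>. [:S $ \<nu>:]) x l j $ n = (\<Sum>\<nu>\<le>n. S $ \<nu> * x l j $ (n - \<nu>))"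
    by (simp add: xi_act_nth act_term_def poly_op_const bpow_nth)
  also have "\<dots> = (S * x l j) $ n"
    by (simp add: fps_mult_nth atLeast0AtMost)
  finally show "xi_smul S x l j $ n = xi_act (\<lambda>\<nu>. [:S $ \<nu>:]) x l j $ n"
    by (simp add: xi_smul_def)
qed

lemma xi_b_as_act: "xi_b x = xi_act (\<lambda>\<nu>. if \<nu> = 1 then 1 else 0) x"
  by (simp add: xi_act_single poly_op_const one_pCons xi_smul_def)

lemma xi_a_as_act: "xi_a x = xi_act (\<lambda>\<nu>. if \<nu> = 0 then [:0, 1:] else 0) x"
  using xi_act_single[of 0 "[:0, 1:]" x]
  by (simp add: poly_op_pCons0_xi_a poly_op_const xi_smul_def)

section \<open>Composition of actions\<close>

definition zero_below :: "nat \<Rightarrow> (nat \<Rightarrow> complex poly) \<Rightarrow> bool" where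
  "zero_below \<nu> Q \<longleftrightarrow> (\<forall>\<mu><\<nu>. Q \<mu> = 0)"

lemma xi_act_sum:
  assumes "\<And>\<nu>. zero_below \<nu> (R \<nu>)"
  shows "xi_act (\<lambda>\<mu>. \<Sum>\<nu>\<le>\<mu>. R \<nu> \<mu>) x l j $ n = (\<Sum>\<nu>\<le>n. xi_act (R \<nu>) x l j $ n)"
proof -
  have "xi_act (\<lambda>\<mu>. \<Sum>\<nu>\<le>\<mu>. R \<nu> \<mu>) x l j $ n = (\<Sum>\<mu>\<le>n. \<Sum>\<nu>\<le>\<mu>. act_term (R \<nu>) x \<mu> l j $ n)"
    by (simp add: xi_act_nth act_term_def poly_op_sum)
  also have "\<dots> = (\<Sum>\<mu>\<le>n. \<Sum>\<nu>\<le>n. act_term (R \<nu>) x \<mu> l j $ n)"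
    using assms by (intro sum.cong refl sum.mono_neutral_left) (auto simp: zero_below_def act_term_zero)
  also have "\<dots> = (\<Sum>\<nu>\<le>n. xi_act (R \<nu>) x l j $ n)"
    by (subst sum.swap) (simp add: xi_act_nth)
  finally show ?thesis .
qed

lemma xi_b_xi_act_const:
  assumes "\<And>\<mu>. degree (Q \<mu>) = 0"
  shows "xi_b (xi_act Q x) = xi_act (\<lambda>\<mu>. case \<mu> of 0 \<Rightarrow> 0 | Suc \<mu>' \<Rightarrow> Q \<mu>') x"
proof (rule xi_eqI)
  fix l j n
  let ?Q' = "\<lambda>\<mu>. case \<mu> of 0 \<Rightarrow> 0 | Suc \<mu>' \<Rightarrow> Q \<mu>'"
  show "xi_b (xi_act Q x) l j $ n = xi_act ?Q' x l j $ n"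
  proof (cases n)
    case 0 then show ?thesis by (simp add: xi_act_nth act_term_def poly_op_zero)
  next
    case (Suc m)
    have "xi_act ?Q' x l j $ n = (\<Sum>\<mu>\<le>m. act_term ?Q' x (Suc \<mu>) l j $ Suc m)"
      by (simp add: xi_act_nth Suc sum.atMost_Suc_shift act_term_def poly_op_zero del: sum.atMost_Suc)
    also have "\<dots> = (\<Sum>\<mu>\<le>m. act_term Q x \<mu> l j $ m)"
      using assms by (simp add: act_term_def poly_op_nth)
    finally show ?thesis by (simp add: Suc xi_act_nth)
  qed
qed

lemma pCons_poly_shift: "p = [:coeff p 0:] + pCons 0 (poly_shift 1 p)"
  by (simp add: poly_eq_iff coeff_poly_shift coeff_pCons split: nat.split)

lemma degree_poly_shift_le: "degree (poly_shift 1 p) \<le> degree p - 1"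
  by (rule degree_le) (simp add: coeff_poly_shift coeff_eq_0)

lemma xi_b_xi_act_add_pCons0:
  "xi_b (xi_act (\<lambda>\<mu>. C \<mu> + pCons 0 (Q \<mu>)) x)
     = xi_add (xi_b (xi_act C x)) (xi_add (xi_a (xi_b (xi_act Q x))) (xi_neg (xi_b (xi_b (xi_act Q x)))))"
  by (simp add: xi_act_add xi_act_pCons0 xi_b_add xi_b_xi_a)

text \<open>
  Moving \<open>b\<close> to the right of \<open>\<Sum> Q\<^sub>\<mu>(a) b\<^sup>\<mu>\<close>, by induction on the degree in \<open>a\<close>: for
  \<open>Q = C + a Q\<^sub>1\<close> one has \<open>bQ = bC + a(bQ\<^sub>1) - b(bQ\<^sub>1)\<close>, so the hypothesis is used twice.
\<close>
lemma xi_b_xi_act_bounded: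
  assumes "\<forall>\<mu>. degree (Q \<mu>) \<le> k"
  shows "\<exists>Q'. (\<forall>\<mu>. degree (Q' \<mu>) \<le> k) \<and> (\<forall>\<nu>. zero_below \<nu> Q \<longrightarrow> zero_below (Suc \<nu>) Q')
           \<and> (\<forall>x. xi_b (xi_act Q x) = xi_act Q' x)"
  using assms
proof (induction k arbitrary: Q)
  case 0
  then have "\<And>\<mu>. degree (Q \<mu>) = 0" by auto
  then show ?case
    by (intro exI[of _ "\<lambda>\<mu>. case \<mu> of 0 \<Rightarrow> 0 | Suc \<mu>' \<Rightarrow> Q \<mu>'"])
      (auto simp: xi_b_xi_act_const zero_below_def split: nat.split)
next
  case (Suc k)
  define C where "C \<mu> = [:coeff (Q \<mu>) 0:]" for \<mu>
  define Q0 where "Q0 \<mu> = poly_shift 1 (Q \<mu>)" for \<mu>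
  have "\<forall>\<mu>. degree (Q0 \<mu>) \<le> k"
    using Suc.prems degree_poly_shift_le unfolding Q0_def by (metis diff_Suc_1 diff_le_mono le_trans)
  then obtain Q1 where Q1: "\<forall>\<mu>. degree (Q1 \<mu>) \<le> k" "\<forall>\<nu>. zero_below \<nu> Q0 \<longrightarrow> zero_below (Suc \<nu>) Q1"
      "\<forall>x. xi_b (xi_act Q0 x) = xi_act Q1 x"
    using Suc.IH by blast
  then obtain Q2 where Q2: "\<forall>\<mu>. degree (Q2 \<mu>) \<le> k" "\<forall>\<nu>. zero_below \<nu> Q1 \<longrightarrow> zero_below (Suc \<nu>) Q2"
      "\<forall>x. xi_b (xi_act Q1 x) = xi_act Q2 x"
    using Suc.IH by blast
  define C' where "C' \<mu> = (case \<mu> of 0 \<Rightarrow> 0 | Suc \<mu>' \<Rightarrow> C \<mu>')" for \<mu>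
  define Q' where "Q' \<mu> = C' \<mu> + pCons 0 (Q1 \<mu>) + - Q2 \<mu>" for \<mu>
  have "xi_b (xi_act Q x) = xi_act Q' x" for x
  proof -
    have "Q = (\<lambda>\<mu>. C \<mu> + pCons 0 (Q0 \<mu>))"
      unfolding C_def Q0_def using pCons_poly_shift by blast
    then have "xi_b (xi_act Q x)
        = xi_add (xi_b (xi_act C x)) (xi_add (xi_a (xi_b (xi_act Q0 x))) (xi_neg (xi_b (xi_b (xi_act Q0 x)))))"
      by (simp only: xi_b_xi_act_add_pCons0)
    also have "\<dots> = xi_add (xi_act C' x) (xi_add (xi_act (\<lambda>\<mu>. pCons 0 (Q1 \<mu>)) x) (xi_act (\<lambda>\<mu>. - Q2 \<mu>) x))"
      unfolding C'_def by (simp add: xi_b_xi_act_const C_def Q1(3) Q2(3) xi_act_pCons0 xi_act_uminus)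
    also have "\<dots> = xi_act Q' x"
      unfolding Q'_def[abs_def] xi_act_add by (rule xi_eqI) simp
    finally show ?thesis .
  qed
  moreover have "degree (Q' \<mu>) \<le> Suc k" for \<mu>
    using Q1(1) Q2(1) degree_pCons_le[of 0 "Q1 \<mu>"] unfolding Q'_def
    by (intro degree_add_le) (auto simp: C'_def C_def split: nat.split intro: le_SucI)
  moreover have "zero_below (Suc \<nu>) Q'" if "zero_below \<nu> Q" for \<nu>
  proof -
    have "zero_below \<nu> Q0" using that by (simp add: zero_below_def Q0_def)
    then have "zero_below (Suc \<nu>) Q1" "zero_below (Suc (Suc \<nu>)) Q2" using Q1(2) Q2(2) by blast+
    moreover have "zero_below (Suc \<nu>) C'" using that by (auto simp: zero_below_def C'_def C_def split: nat.split)
    ultimately show ?thesis by (simp add: zero_below_def Q'_def)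
  qed
  ultimately show ?case by blast
qed

lemma xi_b_xi_act:
  "\<exists>Q'. (\<forall>\<nu>. zero_below \<nu> Q \<longrightarrow> zero_below (Suc \<nu>) Q') \<and> (\<forall>x. xi_b (xi_act Q x) = xi_act Q' x)"
proof -
  define S where "S \<mu> = (\<lambda>\<mu>'. if \<mu>' = \<mu> then Q \<mu> else 0)" for \<mu>
  have "\<forall>\<mu>. \<exists>Q'. (\<forall>\<nu>. zero_below \<nu> (S \<mu>) \<longrightarrow> zero_below (Suc \<nu>) Q') \<and> (\<forall>x. xi_b (xi_act (S \<mu>) x) = xi_act Q' x)"
  proof
    fix \<mu>
    have "\<forall>\<mu>'. degree (S \<mu> \<mu>') \<le> degree (Q \<mu>)" by (simp add: S_def)
    then show "\<exists>Q'. (\<forall>\<nu>. zero_below \<nu> (S \<mu>) \<longrightarrow> zero_below (Suc \<nu>) Q') \<and> (\<forall>x. xi_b (xi_act (S \<mu>) x) = xi_act Q' x)"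
      using xi_b_xi_act_bounded by blast
  qed
  then obtain S' where S': "\<And>\<mu> \<nu>. zero_below \<nu> (S \<mu>) \<Longrightarrow> zero_below (Suc \<nu>) (S' \<mu>)"
    "\<And>\<mu> x. xi_b (xi_act (S \<mu>) x) = xi_act (S' \<mu>) x" by metis
  have S'_zero: "zero_below (Suc \<mu>) (S' \<mu>)" for \<mu>
    by (rule S'(1)) (auto simp: zero_below_def S_def)
  define Q' where "Q' \<mu>' = (\<Sum>\<mu>\<le>\<mu>'. S' \<mu> \<mu>')" for \<mu>'
  have "xi_b (xi_act Q x) = xi_act Q' x" for x
  proof (rule xi_eqI)
    fix l j n
    have "xi_act Q' x l j $ n = (\<Sum>\<mu>\<le>n. xi_act (S' \<mu>) x l j $ n)"
      unfolding Q'_def[abs_def] by (rule xi_act_sum) (use S'_zero in \<open>auto simp: zero_below_def\<close>)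
    also have "\<dots> = (\<Sum>\<mu>\<le>n. xi_b (act_term Q x \<mu>) l j $ n)"
      by (simp add: S'(2)[symmetric] S_def xi_act_single act_term_def)
    also have "\<dots> = xi_b (xi_act Q x) l j $ n"
      by (cases n) (simp_all add: xi_act_nth_upto[of _ "Suc _", OF le_SucI[OF order_refl]]
          del: sum.atMost_Suc)
    finally show "xi_b (xi_act Q x) l j $ n = xi_act Q' x l j $ n" by simp
  qed
  moreover have "zero_below (Suc \<nu>) Q'" if "zero_below \<nu> Q" for \<nu>
  proof -
    have "S' \<mu> \<mu>' = 0" if "\<mu>' < Suc \<nu>" "\<mu> \<le> \<mu>'" for \<mu> \<mu>'
    proof (cases "\<mu> < \<nu>")
      case True
      then have "\<forall>\<nu>'. zero_below \<nu>' (S \<mu>)" using \<open>zero_below \<nu> Q\<close> by (simp add: zero_below_def S_def)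
      then show ?thesis using S'(1)[of \<mu>' \<mu>] by (simp add: zero_below_def)
    next
      case False then show ?thesis using S'_zero[of \<mu>] that by (simp add: zero_below_def)
    qed
    then show ?thesis by (simp add: zero_below_def Q'_def)
  qed
  ultimately show ?thesis by blast
qed

lemma bpow_xi_act: "\<exists>Q'. zero_below \<nu> Q' \<and> (\<forall>x. (xi_b ^^ \<nu>) (xi_act Q x) = xi_act Q' x)"
proof (induction \<nu>)
  case 0 then show ?case by (auto simp: zero_below_def)
next
  case (Suc \<nu>)
  then obtain Q1 where "zero_below \<nu> Q1" "\<forall>x. (xi_b ^^ \<nu>) (xi_act Q x) = xi_act Q1 x" by blast
  moreover obtain Q2 where "\<forall>\<nu>. zero_below \<nu> Q1 \<longrightarrow> zero_below (Suc \<nu>) Q2" "\<forall>x. xi_b (xi_act Q1 x) = xi_act Q2 x"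
    using xi_b_xi_act by blast
  ultimately show ?case by auto
qed

lemma poly_op_xi_act: "poly_op p xi_a (xi_act Q x) = xi_act (\<lambda>\<mu>. p * Q \<mu>) x"
proof (induction p rule: pCons_induct)
  case 0 then show ?case
    by (rule xi_eqI) (simp add: poly_op_zero xi_act_nth act_term_def)
next
  case (pCons c p)
  have "pCons c p = [:c:] + pCons 0 p" by simp
  then have "poly_op (pCons c p) xi_a (xi_act Q x)
      = xi_add (xi_smul (fps_const c) (xi_act Q x)) (xi_a (poly_op p xi_a (xi_act Q x)))"
    by (metis poly_op_add poly_op_const poly_op_pCons0_xi_a)
  also have "\<dots> = xi_act (\<lambda>\<mu>. smult c (Q \<mu>) + pCons 0 (p * Q \<mu>)) x"
    by (simp add: pCons.IH xi_act_add xi_act_smult xi_act_pCons0)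
  finally show ?case by simp
qed

lemma xi_act_xi_act: "\<exists>R. \<forall>x. xi_act P (xi_act Q x) = xi_act R x"
proof -
  have "\<forall>\<nu>. \<exists>Q'. zero_below \<nu> Q' \<and> (\<forall>x. (xi_b ^^ \<nu>) (xi_act Q x) = xi_act Q' x)"
    using bpow_xi_act by blast
  then obtain Qn where Qn: "\<And>\<nu>. zero_below \<nu> (Qn \<nu>)" "\<And>\<nu> x. (xi_b ^^ \<nu>) (xi_act Q x) = xi_act (Qn \<nu>) x"
    by metis
  define R where "R \<mu> = (\<Sum>\<nu>\<le>\<mu>. P \<nu> * Qn \<nu> \<mu>)" for \<mu>
  have "xi_act P (xi_act Q x) = xi_act R x" for x
  proof (rule xi_eqI)
    fix l j n
    have "xi_act R x l j $ n = (\<Sum>\<nu>\<le>n. xi_act (\<lambda>\<mu>. P \<nu> * Qn \<nu> \<mu>) x l j $ n)"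
      unfolding R_def[abs_def] by (rule xi_act_sum) (use Qn(1) in \<open>simp add: zero_below_def\<close>)
    also have "\<dots> = (\<Sum>\<nu>\<le>n. act_term P (xi_act Q x) \<nu> l j $ n)"
      by (simp add: act_term_def Qn(2) poly_op_xi_act)
    finally show "xi_act P (xi_act Q x) l j $ n = xi_act R x l j $ n" by (simp add: xi_act_nth)
  qed
  then show ?thesis by blast
qed

lemma theme_gen_generator: "\<phi> \<in> theme_gen \<phi>"
  unfolding theme_gen_def by (rule range_eqI[where x="\<lambda>\<nu>. if \<nu> = 0 then 1 else 0"]) (simp add: xi_act_one)

lemma theme_gen_act:
  assumes "x \<in> theme_gen \<phi>"
  shows "xi_act P x \<in> theme_gen \<phi>"
proof -
  obtain Q where "x = xi_act Q \<phi>" using assms unfolding theme_gen_def by blast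
  moreover obtain R where "\<forall>x. xi_act P (xi_act Q x) = xi_act R x" using xi_act_xi_act by blast
  ultimately show ?thesis unfolding theme_gen_def by auto
qed

lemma theme_gen_add: "x \<in> theme_gen \<phi> \<Longrightarrow> y \<in> theme_gen \<phi> \<Longrightarrow> xi_add x y \<in> theme_gen \<phi>"
  unfolding theme_gen_def by (auto simp: xi_act_add[symmetric])

lemma sub_module_theme_gen: "sub_module (theme_gen \<phi>)"
  by (simp add: sub_module_def theme_gen_add theme_gen_act)

lemma sub_module_smul: "sub_module M \<Longrightarrow> x \<in> M \<Longrightarrow> xi_smul S x \<in> M"
  by (simp add: sub_module_def xi_smul_as_act)

lemma sub_module_a: "sub_module M \<Longrightarrow> x \<in> M \<Longrightarrow> xi_a x \<in> M"
  by (simp add: sub_module_def xi_a_as_act)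

lemma sub_module_b: "sub_module M \<Longrightarrow> x \<in> M \<Longrightarrow> xi_b x \<in> M"
  by (simp add: sub_module_def xi_b_as_act)

lemma sub_module_add: "sub_module M \<Longrightarrow> x \<in> M \<Longrightarrow> y \<in> M \<Longrightarrow> xi_add x y \<in> M"
  by (simp add: sub_module_def)

section \<open>Saturation and annihilating polynomials\<close>

lemma saturation_least:
  assumes "E \<subseteq> M" "\<And>x y. x \<in> M \<Longrightarrow> y \<in> M \<Longrightarrow> xi_add x y \<in> M"
    "\<And>S x. x \<in> M \<Longrightarrow> xi_smul S x \<in> M" "\<And>x. x \<in> M \<Longrightarrow> xi_binva x \<in> M"
  shows "saturation E \<subseteq> M"
  unfolding saturation_def using assms by (intro Inter_lower) blast

lemma saturation_mem_iff: "x \<in> saturation E \<longleftrightarrow> (\<forall>M. E \<subseteq> M \<and> (\<forall>x\<in>M. \<forall>y\<in>M. xi_add x y \<in> M)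
    \<and> (\<forall>S. \<forall>x\<in>M. xi_smul S x \<in> M) \<and> (\<forall>x\<in>M. xi_binva x \<in> M) \<longrightarrow> x \<in> M)"
  by (simp only: saturation_def Inter_iff mem_Collect_eq Ball_def)

lemma saturation_base: "E \<subseteq> saturation E"
  unfolding saturation_def by (rule Inter_greatest) simp

lemma saturation_add: "x \<in> saturation E \<Longrightarrow> y \<in> saturation E \<Longrightarrow> xi_add x y \<in> saturation E"
  and saturation_smul: "x \<in> saturation E \<Longrightarrow> xi_smul S x \<in> saturation E"
  and saturation_binva: "x \<in> saturation E \<Longrightarrow> xi_binva x \<in> saturation E"
  unfolding saturation_mem_iff by blast+

definition neg_binva :: "xi \<Rightarrow> xi" where
  "neg_binva y = xi_neg (xi_binva y)"

lemma neg_binva_nth: "neg_binva y l j $ n = - ((of_rat l + of_nat n) * y l j $ n + y l (Suc j) $ n)"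
  by (simp add: neg_binva_def)

lemma saturation_neg_binva: "x \<in> saturation E \<Longrightarrow> neg_binva x \<in> saturation E"
  unfolding neg_binva_def xi_neg_eq_smul by (intro saturation_smul saturation_binva)

lemma annihilates_iff:
  "annihilates E p \<longleftrightarrow> (\<forall>x\<in>saturation E. poly_op p neg_binva x \<in> xi_b ` saturation E)"
  by (simp add: annihilates_def neg_binva_def[abs_def])

lemma annihilates_0: "annihilates E 0"
  unfolding annihilates_iff
proof
  fix x assume "x \<in> saturation E"
  moreover have "poly_op 0 neg_binva x = xi_b (xi_smul 0 x)"
    by (rule xi_eqI) (simp add: poly_op_zero xi_b_nth xi_smul_def)
  ultimately show "poly_op 0 neg_binva x \<in> xi_b ` saturation E" using saturation_smul by blast
qed

lemma annihilates_add:
  assumes "annihilates E p" "annihilates E q"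
  shows "annihilates E (p + q)"
  unfolding annihilates_iff
proof
  fix x assume "x \<in> saturation E"
  then obtain y z where "y \<in> saturation E" "poly_op p neg_binva x = xi_b y"
    "z \<in> saturation E" "poly_op q neg_binva x = xi_b z"
    using assms unfolding annihilates_iff by blast
  then show "poly_op (p + q) neg_binva x \<in> xi_b ` saturation E"
    using saturation_add by (simp add: poly_op_add xi_b_add[symmetric])
qed

lemma annihilates_smult:
  assumes "annihilates E p"
  shows "annihilates E (smult c p)"
  unfolding annihilates_iff
proof
  fix x assume "x \<in> saturation E"
  then obtain y where "y \<in> saturation E" "poly_op p neg_binva x = xi_b y"
    using assms unfolding annihilates_iff by blast
  then show "poly_op (smult c p) neg_binva x \<in> xi_b ` saturation E"
    using saturation_smul by (simp add: poly_op_smult xi_b_smul[symmetric])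
qed

lemma annihilates_pCons0: "annihilates E p \<Longrightarrow> annihilates E (pCons 0 p)"
  unfolding annihilates_iff poly_op_pCons0 using saturation_neg_binva by blast

lemma annihilates_mult: "annihilates E q \<Longrightarrow> annihilates E (r * q)"
  by (induction r rule: pCons_induct) (simp_all add: annihilates_0 annihilates_add annihilates_smult annihilates_pCons0)

text \<open>The annihilating polynomials form an ideal, so a monic one of least degree divides all of them.\<close>
lemma annihilates_bernstein_poly_dvd:
  assumes ann: "annihilates E p" and "p \<noteq> 0"
  shows "\<exists>q. is_bernstein_poly E q \<and> q dvd p"
proof -
  define n0 where "n0 = (LEAST n. \<exists>q. q \<noteq> 0 \<and> annihilates E q \<and> degree q = n)"
  have "\<exists>q. q \<noteq> 0 \<and> annihilates E q \<and> degree q = n0"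
    unfolding n0_def by (rule LeastI_ex) (use assms in blast)
  then obtain q0 where q0: "q0 \<noteq> 0" "annihilates E q0" "degree q0 = n0" by blast
  have minimal: "n0 \<le> degree q'" if "q' \<noteq> 0" "annihilates E q'" for q'
    unfolding n0_def by (rule Least_le) (use that in blast)
  define q where "q = smult (inverse (lead_coeff q0)) q0"
  have q: "lead_coeff q = 1" "annihilates E q" "degree q = n0" "q \<noteq> 0"
    using q0 by (auto simp: q_def annihilates_smult)
  have "p mod q = p + smult (-1) (p div q * q)"
    using minus_div_mult_eq_mod[of p q] by simp
  moreover have "annihilates E (p + smult (-1) (p div q * q))"
    by (rule annihilates_add[OF ann annihilates_smult[OF annihilates_mult[OF q(2)]]])
  ultimately have "annihilates E (p mod q)" by simp
  then have "p mod q = 0"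
    using minimal degree_mod_less[OF q(4), of p] q(3) by fastforce
  moreover have "is_bernstein_poly E q"
    unfolding is_bernstein_poly_def using q minimal by auto
  ultimately show ?thesis by (auto simp: mod_eq_0_iff_dvd)
qed

lemma lambda_primitive_if_annihilates:
  assumes "lambda_primitive lam E" and "\<And>p. annihilates E p \<Longrightarrow> annihilates E' p"
  shows "lambda_primitive lam E'"
proof -
  obtain p where p: "is_bernstein_poly E p" "\<And>z. poly p z = 0 \<Longrightarrow> \<exists>n::int. z = - lam + of_int n"
    using assms(1) unfolding lambda_primitive_def by blast
  then have "annihilates E' p" "p \<noteq> 0" using assms(2) by (auto simp: is_bernstein_poly_def)
  then obtain q where "is_bernstein_poly E' q" "q dvd p"
    using annihilates_bernstein_poly_dvd by blast
  then show ?thesis unfolding lambda_primitive_def using p(2) by (auto elim!: dvdE)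
qed

section \<open>Primitivity forces a single exponent\<close>

definition vanishes_from :: "rat \<Rightarrow> nat \<Rightarrow> xi \<Rightarrow> bool" where
  "vanishes_from l j y \<longleftrightarrow> (\<forall>j'\<ge>j. y l j' = 0)"

lemma vanishes_from_iff: "vanishes_from l j y \<longleftrightarrow> (\<forall>j'\<ge>j. \<forall>n. y l j' $ n = 0)"
  by (auto simp: vanishes_from_def fps_eq_iff)

lemma vanishes_from_funpow:
  "(\<And>y. vanishes_from l j y \<Longrightarrow> vanishes_from l j (T y)) \<Longrightarrow> vanishes_from l j y
    \<Longrightarrow> vanishes_from l j ((T ^^ i) y)"
  by (induction i) auto

lemma vanishes_from_xi_act: "vanishes_from l j y \<Longrightarrow> vanishes_from l j (xi_act P y)"
proof -
  assume "vanishes_from l j y"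
  then have "vanishes_from l j ((xi_a ^^ i) ((xi_b ^^ \<nu>) y))" for i \<nu>
    by (intro vanishes_from_funpow) (auto simp: vanishes_from_iff xi_a_nth xi_b_nth)
  then show ?thesis by (simp add: vanishes_from_iff xi_act_nth act_term_def poly_op_nth)
qed

lemma xi_act_zero: "xi_act P xi_zero = xi_zero"
proof -
  have "vanishes_from l 0 (xi_act P xi_zero)" for l
    by (rule vanishes_from_xi_act) (simp add: vanishes_from_def xi_zero_def)
  then show ?thesis by (auto simp: vanishes_from_def xi_zero_def)
qed

lemma vanishes_from_saturation:
  assumes "vanishes_from l j \<phi>" "x \<in> saturation (theme_gen \<phi>)"
  shows "vanishes_from l j x"
proof -
  have "saturation (theme_gen \<phi>) \<subseteq> {x. vanishes_from l j x}"
  proof (rule saturation_least)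
    show "theme_gen \<phi> \<subseteq> {x. vanishes_from l j x}"
      using assms(1) vanishes_from_xi_act by (auto simp: theme_gen_def)
  next
    fix x y assume "x \<in> {x. vanishes_from l j x}" "y \<in> {x. vanishes_from l j x}"
    then show "xi_add x y \<in> {x. vanishes_from l j x}" by (simp add: vanishes_from_def xi_add_def)
  next
    fix S x assume "x \<in> {x. vanishes_from l j x}"
    then show "xi_smul S x \<in> {x. vanishes_from l j x}" by (simp add: vanishes_from_def xi_smul_def)
  next
    fix x assume "x \<in> {x. vanishes_from l j x}"
    then show "xi_binva x \<in> {x. vanishes_from l j x}" by (simp add: vanishes_from_iff)
  qed
  then show ?thesis using assms(2) by blast
qed

lemma vanishes_from_theme_gen: "vanishes_from l j \<phi> \<Longrightarrow> x \<in> theme_gen \<phi> \<Longrightarrow> vanishes_from l j x"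
  using vanishes_from_saturation saturation_base by blast

lemma finite_log_support:
  assumes "\<phi> \<in> Xi"
  shows "finite {j. \<phi> l j \<noteq> 0}"
proof -
  have "finite {(l, j). \<phi> l j \<noteq> 0}" using assms by (simp add: Xi_def)
  from finite_imageI[OF this, of snd] show ?thesis by (rule finite_subset[rotated]) force
qed

lemma vanishes_from_top:
  "finite {j. \<phi> l j \<noteq> 0} \<Longrightarrow> vanishes_from l (Suc (Max {j. \<phi> l j \<noteq> 0})) \<phi>"
  unfolding vanishes_from_def by (metis (mono_tags, lifting) Max_ge mem_Collect_eq not_less_eq_eq)

lemma poly_op_neg_binva_top:
  assumes "\<forall>j>K. y l j = 0"
  shows "poly_op p neg_binva y l K $ n = poly p (- (of_rat l + of_nat n)) * y l K $ n"
proof -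
  have "(\<forall>j>K. (neg_binva ^^ i) y l j = 0)
      \<and> (\<forall>n. (neg_binva ^^ i) y l K $ n = (- (of_rat l + of_nat n)) ^ i * y l K $ n)" for i
  proof (induction i)
    case 0 then show ?case using assms by simp
  next
    case (Suc i)
    then show ?case by (auto simp: neg_binva_nth fps_eq_iff algebra_simps)
  qed
  then show ?thesis
    by (simp add: poly_op_nth poly_altdef sum_distrib_right mult.assoc)
qed

text \<open>Evaluate on an element of the saturation whose top coordinate has minimal \<open>b\<close>-order \<open>m\<close>.\<close>
lemma annihilates_root_at_support:
  assumes "\<phi> \<in> Xi" and ann: "annihilates (theme_gen \<phi>) p" and "\<phi> l j0 \<noteq> 0"
  shows "\<exists>m::nat. poly p (- (of_rat l + of_nat m)) = 0"
proof -
  let ?S = "saturation (theme_gen \<phi>)"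
  define K where "K = Max {j. \<phi> l j \<noteq> 0}"
  have fin: "finite {j. \<phi> l j \<noteq> 0}" using finite_log_support[OF assms(1)] .
  then have K: "\<phi> l K \<noteq> 0" unfolding K_def using Max_in assms(3) by blast
  have top: "\<forall>j>K. x l j = 0" if "x \<in> ?S" for x
    using vanishes_from_saturation[OF vanishes_from_top[of \<phi> l, OF fin] that] by (simp add: vanishes_from_def K_def)
  have "\<phi> \<in> ?S" using theme_gen_generator saturation_base by blast
  then have "\<exists>x\<in>?S. x l K \<noteq> 0" using K by blast
  define m where "m = (LEAST n. \<exists>x\<in>?S. x l K \<noteq> 0 \<and> subdegree (x l K) = n)"
  obtain x where x: "x \<in> ?S" "x l K \<noteq> 0" "subdegree (x l K) = m"
    using LeastI_ex[of "\<lambda>n. \<exists>x\<in>?S. x l K \<noteq> 0 \<and> subdegree (x l K) = n"] \<open>\<exists>x\<in>?S. x l K \<noteq> 0\<close>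
    unfolding m_def by blast
  have minimal: "m \<le> subdegree (y l K)" if "y \<in> ?S" "y l K \<noteq> 0" for y
    unfolding m_def by (rule Least_le) (use that in blast)
  obtain y where y: "y \<in> ?S" "poly_op p neg_binva x = xi_b y"
    using ann x(1) unfolding annihilates_iff by blast
  have "xi_b y l K $ m = 0"
  proof (cases m)
    case (Suc m')
    then show ?thesis using minimal[OF y(1)] by (cases "y l K = 0") (auto intro: nth_less_subdegree_zero)
  qed simp
  moreover have "poly p (- (of_rat l + of_nat m)) * x l K $ m = poly_op p neg_binva x l K $ m"
    using poly_op_neg_binva_top[of K x l, OF top[OF x(1)]] by simp
  ultimately have "poly p (- (of_rat l + of_nat m)) * x l K $ m = 0"
    using y(2) by simp
  moreover have "x l K $ m \<noteq> 0" using x by (metis nth_subdegree_nonzero)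
  ultimately show ?thesis by auto
qed

lemma lambda_primitive_exponent:
  assumes "\<phi> \<in> Xi" "lambda_primitive lam (theme_gen \<phi>)" "\<phi> l j \<noteq> 0"
  shows "\<exists>k::int. of_rat l = lam + of_int k"
proof -
  obtain p where p: "is_bernstein_poly (theme_gen \<phi>) p"
    "\<And>z. poly p z = 0 \<Longrightarrow> \<exists>n::int. z = - lam + of_int n"
    using assms(2) unfolding lambda_primitive_def by blast
  then have "annihilates (theme_gen \<phi>) p" by (simp add: is_bernstein_poly_def)
  then obtain m :: nat where "poly p (- (of_rat l + of_nat m)) = 0"
    using annihilates_root_at_support[OF assms(1) _ assms(3)] by blast
  then obtain n :: int where "- (of_rat l + of_nat m) = - lam + of_int n" using p(2) by blast
  then have "of_rat l = lam + of_int (- n - int m)" by (simp add: algebra_simps)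
  then show ?thesis by blast
qed

lemma lambda_primitive_single_exponent:
  assumes "\<phi> \<in> Xi" "lambda_primitive lam (theme_gen \<phi>)" "\<phi> l1 j1 \<noteq> 0" "\<phi> l2 j2 \<noteq> 0"
  shows "l1 = l2"
proof -
  obtain k1 k2 :: int where "of_rat l1 = lam + of_int k1" "of_rat l2 = lam + of_int k2"
    using lambda_primitive_exponent[OF assms(1,2)] assms(3,4) by metis
  then have "(of_rat (l1 - l2) :: complex) = of_rat (of_int (k1 - k2))"
    by (simp add: of_rat_diff)
  then have eq: "l1 - l2 = of_int (k1 - k2)" by (simp only: of_rat_eq_iff)
  have "0 < l1" "l1 \<le> 1" "0 < l2" "l2 \<le> 1" using assms(1,3,4) by (auto simp: Xi_def)
  then have "of_int (k1 - k2) < (1::rat)" "(-1::rat) < of_int (k1 - k2)" using eq by linarith+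
  then have "k1 - k2 = 0" by linarith
  then show ?thesis using eq by simp
qed

section \<open>The log shift\<close>

text \<open>In the basis \<open>e\<^sub>\<lambda>\<^sub>,\<^sub>j\<close> this is \<open>e\<^sub>\<lambda>\<^sub>,\<^sub>j\<^sub>+\<^sub>1 \<mapsto> e\<^sub>\<lambda>\<^sub>,\<^sub>j\<close>, \<open>e\<^sub>\<lambda>\<^sub>,\<^sub>0 \<mapsto> 0\<close>, the nilpotent part of \<open>s d/ds\<close>.\<close>
definition log_shift :: "xi \<Rightarrow> xi" where
  "log_shift x = (\<lambda>l j. x l (Suc j))"

lemma log_shift_apply: "log_shift x l j = x l (Suc j)"
  by (simp add: log_shift_def)

lemma log_shift_zero [simp]: "log_shift xi_zero = xi_zero"
  by (simp add: log_shift_def xi_zero_def)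

lemma log_shift_add: "log_shift (xi_add x y) = xi_add (log_shift x) (log_shift y)"
  and log_shift_smul: "log_shift (xi_smul S x) = xi_smul S (log_shift x)"
  and log_shift_xi_a: "log_shift (xi_a x) = xi_a (log_shift x)"
  and log_shift_xi_b: "log_shift (xi_b x) = xi_b (log_shift x)"
  and log_shift_binva: "log_shift (xi_binva x) = xi_binva (log_shift x)"
  and log_shift_neg_binva: "log_shift (neg_binva x) = neg_binva (log_shift x)"
  by (rule xi_eqI; simp add: log_shift_apply xi_add_def xi_smul_def xi_a_nth xi_b_nth neg_binva_nth)+

lemma log_shift_poly_op:
  assumes "\<And>y. log_shift (T y) = T (log_shift y)"
  shows "log_shift (poly_op p T x) = poly_op p T (log_shift x)"
proof -
  have "(T ^^ i) (log_shift y) = log_shift ((T ^^ i) y)" for i y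
    by (induction i) (simp_all add: assms)
  then show ?thesis by (intro xi_eqI) (simp add: poly_op_nth log_shift_apply)
qed

lemma log_shift_xi_act: "log_shift (xi_act P x) = xi_act P (log_shift x)"
proof (rule xi_eqI)
  fix l j n
  have "(xi_b ^^ \<nu>) (log_shift x) = log_shift ((xi_b ^^ \<nu>) x)" for \<nu>
    by (induction \<nu>) (simp_all add: log_shift_xi_b)
  then have "act_term P (log_shift x) \<nu> = log_shift (act_term P x \<nu>)" for \<nu>
    by (simp add: act_term_def log_shift_poly_op log_shift_xi_a)
  then show "log_shift (xi_act P x) l j $ n = xi_act P (log_shift x) l j $ n"
    by (simp add: xi_act_nth log_shift_apply)
qed

lemma log_shift_theme_gen: "log_shift ` theme_gen \<phi> = theme_gen (log_shift \<phi>)"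
  unfolding theme_gen_def image_image log_shift_xi_act by simp

lemma log_shift_Xi:
  assumes "\<phi> \<in> Xi"
  shows "log_shift \<phi> \<in> Xi"
proof -
  have "{(l, j). log_shift \<phi> l j \<noteq> 0} \<subseteq> (\<lambda>(l, j). (l, j - 1)) ` {(l, j). \<phi> l j \<noteq> 0}"
  proof
    fix p assume "p \<in> {(l, j). log_shift \<phi> l j \<noteq> 0}"
    then obtain l j where "p = (l, j)" "\<phi> l (Suc j) \<noteq> 0" by (auto simp: log_shift_apply)
    then show "p \<in> (\<lambda>(l, j). (l, j - 1)) ` {(l, j). \<phi> l j \<noteq> 0}"
      by (intro image_eqI[of _ _ "(l, Suc j)"]) auto
  qed
  then have "finite {(l, j). log_shift \<phi> l j \<noteq> 0}"
    using assms finite_subset unfolding Xi_def by blast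
  then show ?thesis using assms unfolding Xi_def by (simp add: log_shift_apply) blast
qed

lemma saturation_log_shift_image: "saturation (log_shift ` E) = log_shift ` saturation E"
proof
  show "saturation (log_shift ` E) \<subseteq> log_shift ` saturation E"
  proof (rule saturation_least)
    show "log_shift ` E \<subseteq> log_shift ` saturation E" using saturation_base by blast
  next
    fix x y assume "x \<in> log_shift ` saturation E" "y \<in> log_shift ` saturation E"
    then show "xi_add x y \<in> log_shift ` saturation E"
      by (auto simp: log_shift_add[symmetric] intro: saturation_add)
  next
    fix S x assume "x \<in> log_shift ` saturation E"
    then show "xi_smul S x \<in> log_shift ` saturation E"
      by (auto simp: log_shift_smul[symmetric] intro: saturation_smul)
  next
    fix x assume "x \<in> log_shift ` saturation E"
    then show "xi_binva x \<in> log_shift ` saturation E"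
      by (auto simp: log_shift_binva[symmetric] intro: saturation_binva)
  qed
  have "saturation E \<subseteq> {x. log_shift x \<in> saturation (log_shift ` E)}"
    by (rule saturation_least)
      (auto simp: log_shift_add log_shift_smul log_shift_binva
        intro: saturation_add saturation_smul saturation_binva saturation_base[THEN subsetD])
  then show "log_shift ` saturation E \<subseteq> saturation (log_shift ` E)" by blast
qed

lemma annihilates_log_shift_image:
  assumes "annihilates E p"
  shows "annihilates (log_shift ` E) p"
  unfolding annihilates_iff saturation_log_shift_image
proof
  fix y assume "y \<in> log_shift ` saturation E"
  then obtain x where x: "x \<in> saturation E" "y = log_shift x" by blast
  obtain z where z: "z \<in> saturation E" "poly_op p neg_binva x = xi_b z"
    using assms x(1) unfolding annihilates_iff by blast
  have "poly_op p neg_binva y = xi_b (log_shift z)"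
    unfolding x(2) by (simp add: log_shift_poly_op[symmetric] log_shift_neg_binva z(2) log_shift_xi_b)
  then show "poly_op p neg_binva y \<in> xi_b ` log_shift ` saturation E" using z(1) by blast
qed

section \<open>Lowering the log-degree\<close>

lemma xi_a_plus_const_b_nth:
  "xi_add (xi_a y) (xi_smul (fps_const c) (xi_b y)) l j $ Suc n
     = (of_rat l + of_nat n + c) * y l j $ n + y l (Suc j) $ n"
  by (simp add: algebra_simps)

text \<open>
  Normalising the top coordinate to \<open>b\<^sup>m\<close> and applying \<open>a - (l + m)b\<close> kills it, since
  \<open>(a - (l + m)b) b\<^sup>m e\<^sub>l\<^sub>,\<^sub>K\<^sub>+\<^sub>1 = b\<^sup>m\<^sup>+\<^sup>1 e\<^sub>l\<^sub>,\<^sub>K\<close>.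
\<close>
lemma lower_log_degree_monomial:
  assumes y_top: "y l (Suc K) = fps_X ^ m" and y_above: "\<forall>j>Suc K. y l j = 0"
  defines "x' \<equiv> xi_add (xi_a y) (xi_smul (fps_const (- (of_rat l + of_nat m))) (xi_b y))"
  shows "\<forall>j>K. x' l j = 0" and "x' l K \<noteq> 0"
proof -
  have x'_0: "x' l j $ 0 = 0" for j
    by (simp add: x'_def)
  have x'_Suc: "x' l j $ Suc n = (of_nat n - of_nat m) * y l j $ n + y l (Suc j) $ n" for j n
  proof -
    have "(of_rat l + of_nat n + - (of_rat l + of_nat m) :: complex) = of_nat n - of_nat m" by simp
    then show ?thesis unfolding x'_def xi_a_plus_const_b_nth by (simp only:)
  qed
  show "\<forall>j>K. x' l j = 0"
  proof (intro allI impI fps_ext)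
    fix j n assume "j > K"
    show "x' l j $ n = 0 $ n"
    proof (cases n)
      case (Suc n')
      show ?thesis
      proof (cases "j = Suc K")
        case True
        then show ?thesis using Suc x'_Suc y_above y_top by (simp add: fps_X_power_nth)
      next
        case False
        then show ?thesis using Suc x'_Suc y_above \<open>j > K\<close> by simp
      qed
    qed (simp add: x'_0)
  qed
  have "x' l K $ Suc m = 1" using x'_Suc y_top by (simp add: fps_X_power_nth)
  then show "x' l K \<noteq> 0" by (metis one_neq_zero fps_zero_nth)
qed

lemma sub_module_lower_log_degree:
  assumes M: "sub_module M" and "x \<in> M" and nz: "x l (Suc K) \<noteq> 0" and top: "\<forall>j>Suc K. x l j = 0"
  shows "\<exists>x'\<in>M. (\<forall>j>K. x' l j = 0) \<and> x' l K \<noteq> 0"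
proof -
  define m where "m = subdegree (x l (Suc K))"
  define s where "s = fps_shift m (x l (Suc K))"
  define y where "y = xi_smul (inverse s) x"
  have "s $ 0 \<noteq> 0" using nz unfolding s_def m_def by simp
  have "x l (Suc K) = s * fps_X ^ m"
    unfolding s_def m_def by (rule subdegree_decompose)
  then have "y l (Suc K) = inverse s * (s * fps_X ^ m)"
    by (simp add: y_def xi_smul_def)
  also have "\<dots> = fps_X ^ m" using inverse_mult_eq_1[OF \<open>s $ 0 \<noteq> 0\<close>] by (simp add: mult.assoc[symmetric])
  finally have "y l (Suc K) = fps_X ^ m" .
  moreover have "\<forall>j>Suc K. y l j = 0" using top by (simp add: y_def xi_smul_def)
  moreover have "xi_add (xi_a y) (xi_smul (fps_const (- (of_rat l + of_nat m))) (xi_b y)) \<in> M"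
    unfolding y_def using assms(2) by (intro sub_module_add sub_module_a sub_module_smul sub_module_b M)
  ultimately show ?thesis using lower_log_degree_monomial by blast
qed

lemma top_log_degree:
  assumes "finite {j. x l j \<noteq> 0}" and "x l (Suc j) \<noteq> 0"
  obtains K where "x l (Suc K) \<noteq> 0" "\<forall>j>Suc K. x l j = 0"
proof -
  let ?A = "{j. x l j \<noteq> 0}"
  define M where "M = Max ?A"
  have "Suc j \<in> ?A" using assms(2) by simp
  then have M_in: "x l M \<noteq> 0" and "Suc j \<le> M"
    using Max_in[OF assms(1)] Max_ge[OF assms(1)] unfolding M_def by auto
  then obtain K where K: "M = Suc K" by (cases M) auto
  have "x l j' = 0" if "j' > M" for j'
  proof (rule ccontr)
    assume "x l j' \<noteq> 0"
    then have "j' \<le> M" using Max_ge[OF assms(1)] unfolding M_def by simp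
    with that show False by simp
  qed
  then show ?thesis using that M_in K by blast
qed

lemma mem_range_xi_smul: "f \<in> range (\<lambda>S. xi_smul S f)"
  by (rule range_eqI[of _ _ 1]) (simp add: xi_smul_def)

section \<open>The normal rank one submodule of a primitive theme\<close>

locale primitive_theme =
  fixes \<phi> :: xi and lam :: complex and l0 :: rat and j0 :: nat
  assumes phi_Xi: "\<phi> \<in> Xi" and primitive: "lambda_primitive lam (theme_gen \<phi>)"
    and phi_nonzero: "\<phi> l0 j0 \<noteq> 0"
begin

abbreviation "E \<equiv> theme_gen \<phi>"

definition log_free :: "xi set" where
  "log_free = {x \<in> E. log_shift x = xi_zero}"

lemma theme_single_exponent:
  assumes "x \<in> E" "l \<noteq> l0"
  shows "x l j = 0"
proof -
  have "vanishes_from l 0 \<phi>"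
    unfolding vanishes_from_def using lambda_primitive_single_exponent[OF phi_Xi primitive _ phi_nonzero] assms(2)
    by blast
  from vanishes_from_theme_gen[OF this assms(1)] show ?thesis by (simp add: vanishes_from_def)
qed

lemma finite_log_support_theme:
  assumes "x \<in> E"
  shows "finite {j. x l j \<noteq> 0}"
proof -
  have "vanishes_from l (Suc (Max {j. \<phi> l j \<noteq> 0})) x"
    using vanishes_from_theme_gen[OF vanishes_from_top[OF finite_log_support[OF phi_Xi]] assms] .
  then have "{j. x l j \<noteq> 0} \<subseteq> {..Max {j. \<phi> l j \<noteq> 0}}"
    unfolding vanishes_from_def using not_less_eq_eq by auto
  then show ?thesis by (rule finite_subset) simp
qed

lemma log_free_apply:
  assumes "g \<in> log_free"
  shows "g l j = (if l = l0 \<and> j = 0 then g l0 0 else 0)"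
proof (cases j)
  case (Suc j')
  then have "g l j = log_shift g l j'" by (simp add: log_shift_apply)
  then show ?thesis using assms Suc by (simp add: log_free_def xi_zero_def)
qed (use assms theme_single_exponent in \<open>auto simp: log_free_def\<close>)

lemma log_free_eqI:
  assumes "g \<in> log_free" "h \<in> log_free" "g l0 0 = h l0 0"
  shows "g = h"
proof (intro ext)
  fix l j show "g l j = h l j"
    using log_free_apply[OF assms(1), of l j] log_free_apply[OF assms(2), of l j] assms(3) by simp
qed

lemma sub_module_log_free: "sub_module log_free"
  unfolding sub_module_def log_free_def
  by (auto simp: log_shift_add log_shift_xi_act xi_act_zero theme_gen_add theme_gen_act)

lemma xi_zero_in_log_free: "xi_zero \<in> log_free"
proof -
  have "xi_smul 0 \<phi> = xi_zero" by (simp add: xi_smul_def xi_zero_def)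
  then show ?thesis
    using sub_module_smul[OF sub_module_theme_gen theme_gen_generator, of 0 \<phi>] by (simp add: log_free_def)
qed

lemma log_free_nontrivial_below:
  "x \<in> E \<Longrightarrow> x \<noteq> xi_zero \<Longrightarrow> \<forall>j>K. x l0 j = 0 \<Longrightarrow> \<exists>g\<in>log_free. g \<noteq> xi_zero"
proof (induction K arbitrary: x)
  case 0
  have "log_shift x = xi_zero"
  proof (intro ext)
    fix l j show "log_shift x l j = xi_zero l j"
      using 0 theme_single_exponent[OF 0(1)] by (cases "l = l0") (auto simp: log_shift_apply xi_zero_def)
  qed
  then show ?case using 0 by (auto simp: log_free_def)
next
  case (Suc K)
  show ?case
  proof (cases "x l0 (Suc K) = 0")
    case True
    then have "\<forall>j>K. x l0 j = 0" using Suc.prems(3) Suc_lessI by blast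
    then show ?thesis using Suc.IH Suc.prems(1,2) by blast
  next
    case False
    then obtain x' where "x' \<in> E" "\<forall>j>K. x' l0 j = 0" "x' l0 K \<noteq> 0"
      using sub_module_lower_log_degree[OF sub_module_theme_gen Suc.prems(1)] Suc.prems(3) by blast
    moreover then have "x' \<noteq> xi_zero" by (auto simp: xi_zero_def)
    ultimately show ?thesis using Suc.IH by blast
  qed
qed

lemma log_free_nontrivial: "\<exists>g\<in>log_free. g \<noteq> xi_zero"
proof (rule log_free_nontrivial_below[OF theme_gen_generator])
  show "\<phi> \<noteq> xi_zero"
  proof
    assume "\<phi> = xi_zero"
    then show False using phi_nonzero by (simp add: xi_zero_def)
  qed
  have "vanishes_from l0 (Suc (Max {j. \<phi> l0 j \<noteq> 0})) \<phi>"
    by (rule vanishes_from_top) (rule finite_log_support[OF phi_Xi])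
  then show "\<forall>j>Max {j. \<phi> l0 j \<noteq> 0}. \<phi> l0 j = 0"
    unfolding vanishes_from_def using Suc_leI by blast
qed

definition min_order :: nat where
  "min_order = (LEAST n. \<exists>g\<in>log_free. g l0 0 \<noteq> 0 \<and> subdegree (g l0 0) = n)"

definition generator :: xi where
  "generator = (SOME g. g \<in> log_free \<and> g l0 0 \<noteq> 0 \<and> subdegree (g l0 0) = min_order)"

lemma generator_spec: "generator \<in> log_free" "generator l0 0 \<noteq> 0" "subdegree (generator l0 0) = min_order"
proof -
  obtain g where "g \<in> log_free" "g \<noteq> xi_zero" using log_free_nontrivial by blast
  have "g l0 0 \<noteq> 0"
  proof
    assume "g l0 0 = 0"
    then have "g = xi_zero"
      using log_free_eqI[OF \<open>g \<in> log_free\<close> xi_zero_in_log_free] by (simp add: xi_zero_def)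
    with \<open>g \<noteq> xi_zero\<close> show False ..
  qed
  then have "\<exists>n. \<exists>g\<in>log_free. g l0 0 \<noteq> 0 \<and> subdegree (g l0 0) = n"
    using \<open>g \<in> log_free\<close> by blast
  then have "\<exists>g\<in>log_free. g l0 0 \<noteq> 0 \<and> subdegree (g l0 0) = min_order"
    unfolding min_order_def by (rule LeastI_ex)
  then have "generator \<in> log_free \<and> generator l0 0 \<noteq> 0 \<and> subdegree (generator l0 0) = min_order"
    unfolding generator_def Bex_def by (rule someI_ex)
  then show "generator \<in> log_free" "generator l0 0 \<noteq> 0" "subdegree (generator l0 0) = min_order"
    by auto
qed

lemma min_order_le: "g \<in> log_free \<Longrightarrow> g l0 0 \<noteq> 0 \<Longrightarrow> min_order \<le> subdegree (g l0 0)"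
  unfolding min_order_def by (rule Least_le) blast

lemma xi_smul_generator_in_log_free: "xi_smul S generator \<in> log_free"
  using sub_module_smul[OF sub_module_log_free generator_spec(1)] .

text \<open>A coordinate of \<open>b\<close>-order at least \<open>min_order\<close> is a power series multiple of that of \<open>generator\<close>.\<close>
lemma log_free_eq_range: "log_free = range (\<lambda>S. xi_smul S generator)"
proof (intro set_eqI iffI)
  fix z assume z: "z \<in> log_free"
  obtain S where "S * generator l0 0 = z l0 0"
  proof (cases "z l0 0 = 0")
    case False
    define k where "k = subdegree (z l0 0)"
    define gs where "gs = fps_shift min_order (generator l0 0)"
    have "min_order \<le> k" using min_order_le[OF z False] k_def by simp
    have "gs $ 0 \<noteq> 0" unfolding gs_def using generator_spec(2) by (simp add: generator_spec(3)[symmetric])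
    have "z l0 0 = fps_shift k (z l0 0) * fps_X ^ k" unfolding k_def by (rule subdegree_decompose)
    moreover have "generator l0 0 = gs * fps_X ^ min_order"
      unfolding gs_def using generator_spec(3) by (metis subdegree_decompose)
    ultimately have "(fps_X ^ (k - min_order) * fps_shift k (z l0 0) * inverse gs) * generator l0 0 = z l0 0"
      using inverse_mult_eq_1[OF \<open>gs $ 0 \<noteq> 0\<close>] \<open>min_order \<le> k\<close>
      by (simp add: power_add[symmetric] algebra_simps)
    then show ?thesis by (rule that)
  qed (use that[of 0] in simp)
  then have "z = xi_smul S generator"
    using log_free_eqI[OF z xi_smul_generator_in_log_free] by (simp add: xi_smul_def)
  then show "z \<in> range (\<lambda>S. xi_smul S generator)" by blast
qed (use xi_smul_generator_in_log_free in blast)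

lemma inj_xi_smul_generator: "inj (\<lambda>S. xi_smul S generator)"
proof
  fix S T assume "xi_smul S generator = xi_smul T generator"
  then have "S * generator l0 0 = T * generator l0 0" by (metis xi_smul_def)
  then show "S = T" using generator_spec(2) by simp
qed

lemma rank1_sub_log_free: "rank1_sub E log_free"
  unfolding rank1_sub_def
proof (intro conjI)
  show "log_free \<subseteq> E" by (auto simp: log_free_def)
  show "sub_module log_free" by (rule sub_module_log_free)
  show "\<exists>f. bij_betw (\<lambda>S. xi_smul S f) UNIV log_free"
    using inj_xi_smul_generator log_free_eq_range by (metis bij_betw_imageI)
qed

lemma normal_sub_log_free: "normal_sub E log_free"
  unfolding normal_sub_def
proof
  show "log_free \<inter> xi_b ` E \<subseteq> xi_b ` log_free"
  proof
    fix z assume "z \<in> log_free \<inter> xi_b ` E"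
    then obtain y where y: "y \<in> E" "z = xi_b y" "z \<in> log_free" by blast
    then have "xi_b (log_shift y) = xi_b xi_zero" by (simp add: log_free_def log_shift_xi_b)
    then have "y \<in> log_free" using y(1) xi_b_inj unfolding log_free_def by blast
    then show "z \<in> xi_b ` log_free" using y by blast
  qed
  show "xi_b ` log_free \<subseteq> log_free \<inter> xi_b ` E"
    using sub_module_b[OF sub_module_log_free] by (auto simp: log_free_def)
qed

text \<open>
  If the generator had log terms, lowering its top one would produce an element of the
  submodule vanishing at a coordinate where the generator does not.
\<close>
lemma rank1_generator_in_log_free:
  assumes F: "sub_module F" "F \<subseteq> E" and F_range: "F = range (\<lambda>S. xi_smul S f)"
  shows "f \<in> log_free"
proof -
  have "f \<in> F" using F_range mem_range_xi_smul by blast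
  then have "f \<in> E" using F(2) by blast
  have "f l0 (Suc j) = 0" for j
  proof (rule ccontr)
    assume "f l0 (Suc j) \<noteq> 0"
    then obtain K where K: "f l0 (Suc K) \<noteq> 0" "\<forall>j>Suc K. f l0 j = 0"
      using top_log_degree[where x=f and l=l0, OF finite_log_support_theme[OF \<open>f \<in> E\<close>]] by blast
    then obtain x' where "x' \<in> F" "\<forall>j>K. x' l0 j = 0" "x' l0 K \<noteq> 0"
      using sub_module_lower_log_degree[OF F(1) \<open>f \<in> F\<close>] by blast
    moreover obtain S where S: "x' = xi_smul S f" using \<open>x' \<in> F\<close> F_range by blast
    ultimately have "S * f l0 (Suc K) = 0" by (simp add: xi_smul_def)
    then have "S = 0" using K(1) by simp
    then have "x' l0 K = 0" using S by (simp add: xi_smul_def)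
    with \<open>x' l0 K \<noteq> 0\<close> show False ..
  qed
  have "log_shift f = xi_zero"
  proof (intro ext)
    fix l j show "log_shift f l j = xi_zero l j"
      using \<open>f l0 (Suc j) = 0\<close> theme_single_exponent[OF \<open>f \<in> E\<close>]
      by (cases "l = l0") (auto simp: log_shift_apply xi_zero_def)
  qed
  then show ?thesis using \<open>f \<in> E\<close> by (simp add: log_free_def)
qed

text \<open>
  A generator divisible by \<open>b\<close> would, by normality, satisfy \<open>f = b T f\<close> for some \<open>T\<close>.
\<close>
lemma normal_rank1_generator_unit:
  assumes "normal_sub E F" and F_range: "F = range (\<lambda>S. xi_smul S f)" and "f l0 0 \<noteq> 0"
    and S0: "f = xi_smul S0 generator"
  shows "S0 $ 0 \<noteq> 0"
proof
  assume "S0 $ 0 = 0"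
  then have "S0 = fps_X * fps_shift 1 S0"
    by (intro fps_ext) (auto simp: fps_X_mult_nth)
  from arg_cong[OF this, of "\<lambda>S. xi_smul S generator"]
  have "f = xi_b (xi_smul (fps_shift 1 S0) generator)"
    by (simp only: S0 xi_b_def xi_smul_smul)
  then have "f \<in> F \<inter> xi_b ` E"
    using F_range mem_range_xi_smul xi_smul_generator_in_log_free by (auto simp: log_free_def)
  then have "f \<in> xi_b ` F" using assms(1) unfolding normal_sub_def by blast
  then obtain w where "w \<in> F" and f_eq: "f = xi_b w" by blast
  obtain T where "w = xi_smul T f" using \<open>w \<in> F\<close> F_range by blast
  have "f = xi_b (xi_smul T f)" using f_eq unfolding \<open>w = xi_smul T f\<close> .
  also have "\<dots> = xi_smul (fps_X * T) f" by (simp only: xi_b_def xi_smul_smul)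
  finally have "f l0 0 = (fps_X * T) * f l0 0"
    by (metis xi_smul_def)
  then have "1 * f l0 0 = (fps_X * T) * f l0 0" by (subst mult_1)
  then have "1 = fps_X * T" using mult_right_cancel[OF \<open>f l0 0 \<noteq> 0\<close>] by blast
  then have "(1::complex fps) $ 0 = (fps_X * T) $ 0" by simp
  then show False by simp
qed

lemma normal_rank1_sub_eq_log_free:
  assumes "rank1_sub E F" "normal_sub E F"
  shows "F = log_free"
proof -
  obtain f where bij: "bij_betw (\<lambda>S. xi_smul S f) UNIV F" using assms(1) unfolding rank1_sub_def by blast
  then have F_range: "F = range (\<lambda>S. xi_smul S f)" and inj: "inj (\<lambda>S. xi_smul S f)"
    by (simp_all add: bij_betw_def)
  have F: "sub_module F" "F \<subseteq> E" using assms(1) by (auto simp: rank1_sub_def)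
  have "f \<in> F" using F_range mem_range_xi_smul by blast
  have f_log_free: "f \<in> log_free" by (rule rank1_generator_in_log_free[OF F F_range])
  have "f l0 0 \<noteq> 0"
  proof
    assume "f l0 0 = 0"
    then have "f = xi_zero"
      using log_free_eqI[OF f_log_free xi_zero_in_log_free] by (simp add: xi_zero_def)
    then have "xi_smul 0 f = xi_smul 1 f" by (simp add: xi_smul_def xi_zero_def)
    then show False using inj by (metis injD zero_neq_one)
  qed
  obtain S0 where S0: "f = xi_smul S0 generator" using f_log_free log_free_eq_range by blast
  then have "S0 $ 0 \<noteq> 0" by (rule normal_rank1_generator_unit[OF assms(2) F_range \<open>f l0 0 \<noteq> 0\<close>])
  then have "xi_smul (inverse S0) f = generator"
    unfolding S0 xi_smul_smul using inverse_mult_eq_1[OF \<open>S0 $ 0 \<noteq> 0\<close>] by (simp add: xi_smul_def)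
  with sub_module_smul[OF F(1) \<open>f \<in> F\<close>, of "inverse S0"] have "generator \<in> F" by simp
  then have "log_free \<subseteq> F" unfolding log_free_eq_range using sub_module_smul[OF F(1)] by auto
  moreover have "F \<subseteq> log_free"
    unfolding F_range using sub_module_smul[OF sub_module_log_free f_log_free] by auto
  ultimately show ?thesis by blast
qed

lemma quotient_by_log_free: "quotient_primitive_theme lam E log_free"
  unfolding quotient_primitive_theme_def
proof (intro bexI[OF _ log_shift_Xi[OF phi_Xi]] exI[of _ log_shift] conjI ballI allI)
  show "log_shift (xi_add x y) = xi_add (log_shift x) (log_shift y)" for x y by (rule log_shift_add)
  show "log_shift (xi_act P x) = xi_act P (log_shift x)" for P x by (rule log_shift_xi_act)
  show "log_shift ` E = theme_gen (log_shift \<phi>)" by (rule log_shift_theme_gen)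
  show "{x \<in> E. log_shift x = xi_zero} = log_free" by (simp add: log_free_def)
  have "lambda_primitive lam (log_shift ` E)"
    by (rule lambda_primitive_if_annihilates[OF primitive annihilates_log_shift_image])
  then show "lambda_primitive lam (theme_gen (log_shift \<phi>))" by (simp add: log_shift_theme_gen)
qed

end

theorem proposition3p4:
  fixes lam :: complex and \<phi> :: xi
  assumes "\<phi> \<in> Xi" and "\<phi> \<noteq> xi_zero"
    and "lambda_primitive lam (theme_gen \<phi>)"
  shows "(\<exists>!F. rank1_sub (theme_gen \<phi>) F \<and> normal_sub (theme_gen \<phi>) F)
       \<and> (\<forall>F. rank1_sub (theme_gen \<phi>) F \<and> normal_sub (theme_gen \<phi>) F
              \<longrightarrow> quotient_primitive_theme lam (theme_gen \<phi>) F)"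
proof -
  obtain l0 j0 where "\<phi> l0 j0 \<noteq> 0"
    using assms(2) unfolding xi_zero_def by (meson ext)
  then interpret primitive_theme \<phi> lam l0 j0 using assms by unfold_locales
  show ?thesis
    using rank1_sub_log_free normal_sub_log_free normal_rank1_sub_eq_log_free quotient_by_log_free
    by blast
qed

end
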